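(* Let $n\ge 2$ and let $f:\mathbb{R}\to[0,\infty)$ be continuous, bounded on every half-line $(-\infty,t]$, unbounded above on $[0,\infty)$, and satisfying $$\limsup_{u\to\infty}\frac{f(u)}{u^n}<\infty .$$ Then for every bounded smooth convex domain $\Omega\subset\mathbb{R}^n$ there is no convex function $u\in C^2(\Omega)$ solving $\det D^2u=f(u)$ in $\Omega$ and satisfying $\lim_{x\to\partial\Omega}u(x)=\infty$.
   Context: A solution with $\lim_{x\to\partial\Omega}u(x)=\infty$ is called a large solution. *)

theory Defs
  imports "HOL-Analysis.Analysis"
begin

definition pd :: "'n::finite \<Rightarrow> (real^'n \<Rightarrow> real) \<Rightarrow> real^'n \<Rightarrow> real" where
  "pd i f x = deriv (\<lambda>t. f (x + t *\<^sub>R axis i 1)) 0"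

fun iter_pd :: "'n::finite list \<Rightarrow> (real^'n \<Rightarrow> real) \<Rightarrow> real^'n \<Rightarrow> real" where
  "iter_pd [] f = f"
| "iter_pd (i # is) f = pd i (iter_pd is f)"

definition Ck_on :: "nat \<Rightarrow> (real^'n::finite) set \<Rightarrow> (real^'n \<Rightarrow> real) \<Rightarrow> bool" where
  "Ck_on k S f \<longleftrightarrow>
     (\<forall>is. length is \<le> k \<longrightarrow> continuous_on S (iter_pd is f)) \<and>
     (\<forall>is i x. length is < k \<longrightarrow> x \<in> S \<longrightarrow>
        (\<lambda>t. iter_pd is f (x + t *\<^sub>R axis i 1)) differentiable (at 0))"

definition smooth_on :: "(real^'n::finite) set \<Rightarrow> (real^'n \<Rightarrow> real) \<Rightarrow> bool" where
  "smooth_on S f \<longleftrightarrow> (\<forall>k. Ck_on k S f)"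

definition hessian :: "(real^'n::finite \<Rightarrow> real) \<Rightarrow> real^'n \<Rightarrow> real^'n^'n" where
  "hessian u x = (\<chi> i j. iter_pd [i, j] u x)"

definition smooth_domain :: "(real^'n::finite) set \<Rightarrow> bool" where
  "smooth_domain \<Omega> \<longleftrightarrow> open \<Omega> \<and> connected \<Omega> \<and> \<Omega> \<noteq> {} \<and>
     (\<exists>\<rho>. smooth_on UNIV \<rho> \<and> \<Omega> = {x. \<rho> x < 0} \<and>
          (\<forall>x\<in>frontier \<Omega>. \<exists>i. pd i \<rho> x \<noteq> 0))"

end

(*
  Suppose u were a convex large solution. Since u blows up at the boundary, the tilted
  function u - q . x attains its minimum in the interior for every vector q, so every q is a
  gradient of u; if moreover q = mu Du(x) + e with 0 <= mu <= 1/2 and e small, the tangent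
  plane at x puts the minimizer into the sublevel set {u < u(x) + tau}, tau ~ u(x). The
  gradient image of this sublevel set therefore contains a tube around the segment
  [0, Du(x)/2] of measure ~ |Du(x)| tau^(n-1), while the area formula and
  det D^2 u = f(u) = O(u^n) bound its measure by O(tau^n). Hence |Du| = O(u + c), so
  log (u + c) is Lipschitz on the bounded set Omega and u is bounded, contradicting the
  blow-up.
*)
theory Submission
  imports Defs
begin

lemma convex_on_imp_above_tangent_plane:
  fixes W :: "'a::real_normed_vector \<Rightarrow> real"
  assumes cvx: "convex_on S W" and dW: "(W has_derivative W') (at x)"
    and x: "x \<in> S" and y: "y \<in> S"
  shows "W x + W' (y - x) \<le> W y"
proof -
  define d where "d = y - x"
  have "((\<lambda>t::real. x + t *\<^sub>R d) has_derivative (\<lambda>t. t *\<^sub>R d)) (at 0)"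
    by (auto intro!: derivative_eq_intros)
  moreover have "(W has_derivative W') (at (x + 0 *\<^sub>R d))" using dW by simp
  ultimately have "((\<lambda>t::real. W (x + t *\<^sub>R d)) has_derivative (\<lambda>t. W' (t *\<^sub>R d))) (at 0)"
    by (rule has_derivative_compose)
  moreover have "(\<lambda>t. W' (t *\<^sub>R d)) = (\<lambda>t. W' d * t)"
    using has_derivative_bounded_linear[OF dW] by (auto simp: linear_simps)
  ultimately have "((\<lambda>t. W (x + t *\<^sub>R d)) has_real_derivative W' d) (at 0)"
    by (simp add: has_field_derivative_def)
  then have "((\<lambda>t. (W (x + t *\<^sub>R d) - W x) / t) \<longlongrightarrow> W' d) (at_right 0)"
    unfolding has_field_derivative_iff by (auto intro: tendsto_mono[OF at_le])
  moreover have "\<forall>\<^sub>F t in at_right 0. (W (x + t *\<^sub>R d) - W x) / t \<le> W y - W x"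
  proof -
    have "\<forall>\<^sub>F t::real in at_right 0. 0 < t \<and> t < 1"
      by (auto simp: eventually_at_right_field intro!: exI[of _ 1])
    then show ?thesis
    proof (rule eventually_mono)
      fix t :: real assume t: "0 < t \<and> t < 1"
      have "x + t *\<^sub>R d = (1 - t) *\<^sub>R x + t *\<^sub>R y"
        by (simp add: d_def algebra_simps)
      then have "W (x + t *\<^sub>R d) \<le> (1 - t) * W x + t * W y"
        using cvx x y t by (auto intro: convex_onD)
      then have "W (x + t *\<^sub>R d) - W x \<le> t * (W y - W x)"
        by (simp add: algebra_simps)
      then show "(W (x + t *\<^sub>R d) - W x) / t \<le> W y - W x"
        using t by (simp add: pos_divide_le_eq mult.commute)
    qed
  qed
  ultimately have "W' d \<le> W y - W x"
    by (intro tendsto_upperbound) auto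
  then show ?thesis by (simp add: d_def)
qed

lemma convex_on_bdd_below:
  fixes W :: "'a::real_normed_vector \<Rightarrow> real"
  assumes cvx: "convex_on S W" and S: "bounded S"
    and x0: "x0 \<in> S" and dW: "(W has_derivative W') (at x0)"
  shows "bdd_below (W ` S)"
proof -
  obtain K where K: "\<And>h. norm (W' h) \<le> norm h * K"
    using bounded_linear.bounded[OF has_derivative_bounded_linear[OF dW]] by blast
  have "W x0 - \<bar>K\<bar> * diameter S \<le> W y" if y: "y \<in> S" for y
  proof -
    have "norm (y - x0) \<le> diameter S"
      using diameter_bounded_bound[OF S y x0] by (simp add: dist_norm)
    then have "\<bar>W' (y - x0)\<bar> \<le> \<bar>K\<bar> * diameter S"
      using K[of "y - x0"] by (smt (verit) mult.commute mult_left_mono abs_ge_self abs_ge_zero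
          norm_ge_zero real_norm_def)
    then show ?thesis
      using convex_on_imp_above_tangent_plane[OF cvx dW x0 y] by linarith
  qed
  then show ?thesis by (rule bdd_belowI2)
qed

lemma convex_on_linear_vimage:
  assumes f: "linear f" and g: "convex_on S g"
  shows "convex_on (f -` S) (\<lambda>x. g (f x))"
proof (rule convex_onI)
  show "convex (f -` S)"
    using f convex_on_imp_convex[OF g] by (rule convex_linear_vimage)
  fix t :: real and x y assume "0 < t" "t < 1" "x \<in> f -` S" "y \<in> f -` S"
  then show "g (f ((1 - t) *\<^sub>R x + t *\<^sub>R y)) \<le> (1 - t) * g (f x) + t * g (f y)"
    using f by (simp add: linear_add linear_scale convex_onD[OF g])
qed

text \<open>Closed sublevel sets keep the minimizer of the tilted function away from the boundary.\<close>
lemma exists_tilted_minimizer: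
  fixes W :: "'a::euclidean_space \<Rightarrow> real"
  assumes P: "open P" "bounded P" and x0: "x0 \<in> P"
    and dW: "\<And>x. x \<in> P \<Longrightarrow> (W has_derivative (\<lambda>h. G x \<bullet> h)) (at x)"
    and closed_sublevel: "\<And>c. closed {x\<in>P. W x \<le> c}"
  obtains y where "y \<in> P" "G y = q" "\<And>z. z \<in> P \<Longrightarrow> W y - q \<bullet> y \<le> W z - q \<bullet> z"
proof -
  obtain R where R: "\<And>z. z \<in> P \<Longrightarrow> norm z \<le> R" using P(2) by (auto simp: bounded_iff)
  have q_bound: "\<bar>q \<bullet> z\<bar> \<le> norm q * R" if "z \<in> P" for z
    using Cauchy_Schwarz_ineq2[of q z] R[OF that] by (meson mult_left_mono norm_ge_zero order_trans)
  define K where "K = {x\<in>P. W x \<le> W x0 + 2 * (norm q * R)}"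
  have x0K: "x0 \<in> K" using q_bound[OF x0] x0 by (simp add: K_def)
  have "compact K"
    unfolding compact_eq_bounded_closed
    using closed_sublevel P(2) by (auto simp: K_def intro: bounded_subset[of P])
  moreover have "continuous_on P W"
    using dW by (meson continuous_at_imp_continuous_on has_derivative_continuous)
  then have "continuous_on K W" by (rule continuous_on_subset) (simp add: K_def)
  then have "continuous_on K (\<lambda>z. W z - q \<bullet> z)" by (intro continuous_intros)
  ultimately obtain y where yK: "y \<in> K"
    and y_min: "\<And>z. z \<in> K \<Longrightarrow> W y - q \<bullet> y \<le> W z - q \<bullet> z"
    using continuous_attains_inf[of K "\<lambda>z. W z - q \<bullet> z"] x0K by blast
  have yP: "y \<in> P" using yK by (simp add: K_def)
  have y_glob: "W y - q \<bullet> y \<le> W z - q \<bullet> z" if z: "z \<in> P" for z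
  proof (cases "z \<in> K")
    case False
    then have "W z > W x0 + 2 * (norm q * R)" using z by (simp add: K_def)
    then show ?thesis using y_min[OF x0K] q_bound[OF z] q_bound[OF x0] by linarith
  qed (rule y_min)
  have "((\<lambda>z. W z - q \<bullet> z) has_derivative (\<lambda>h. G y \<bullet> h - q \<bullet> h)) (at y)"
    by (rule has_derivative_diff[OF dW[OF yP]]) (auto intro!: derivative_eq_intros)
  moreover have "\<forall>\<^sub>F z in at y. W y - q \<bullet> y \<le> W z - q \<bullet> z"
    using eventually_at_in_open'[OF P(1) yP] by (rule eventually_mono) (rule y_glob)
  ultimately have "(\<lambda>h. G y \<bullet> h - q \<bullet> h) = (\<lambda>h. 0)"
    by (rule has_derivative_local_min)
  then have "(G y - q) \<bullet> (G y - q) = 0" by (metis inner_diff_left)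
  then have "G y = q" by simp
  with yP y_glob show ?thesis using that by blast
qed

lemma closed_sublevel_of_boundary_blowup:
  fixes u :: "'a::metric_space \<Rightarrow> real"
  assumes S: "open S" and cont: "continuous_on S u"
    and blowup: "\<forall>z\<in>frontier S. filterlim u at_top (at z within S)"
  shows "closed {x\<in>S. u x \<le> c}"
  unfolding closed_sequential_limits
proof (intro allI impI, elim conjE)
  fix xs y assume xs: "\<forall>k. xs k \<in> {x\<in>S. u x \<le> c}" and lim: "xs \<longlonglongrightarrow> y"
  show "y \<in> {x\<in>S. u x \<le> c}"
  proof (cases "y \<in> S")
    case True
    then have "isCont u y" using continuous_on_eq_continuous_at[OF S] cont by blast
    from isCont_tendsto_compose[OF this lim] have "u y \<le> c"
      using xs by (intro LIMSEQ_le_const2) auto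
    with True show ?thesis by simp
  next
    case False
    have "y \<in> closure S" unfolding closure_sequential using xs lim by blast
    with False S have fr: "y \<in> frontier S" by (simp add: frontier_def interior_open)
    have "filterlim xs (at y within S) sequentially"
      unfolding filterlim_at using xs lim False by (auto intro!: always_eventually)
    from filterlim_compose[OF blowup[rule_format, OF fr] this]
    have "filterlim (\<lambda>k. u (xs k)) at_top sequentially" by (simp add: o_def)
    then obtain k where "u (xs k) > c"
      by (auto simp: filterlim_at_top_dense eventually_sequentially)
    with xs show ?thesis by (simp add: not_le[symmetric])
  qed
qed

lemma not_bdd_above_of_boundary_blowup:
  fixes u :: "'a::euclidean_space \<Rightarrow> real"
  assumes S: "open S" "bounded S" "S \<noteq> {}"
    and blowup: "\<forall>z\<in>frontier S. filterlim u at_top (at z within S)"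
  shows "\<not> bdd_above (u ` S)"
proof
  assume "bdd_above (u ` S)"
  then obtain M where M: "\<And>x. x \<in> S \<Longrightarrow> u x \<le> M" by (auto simp: bdd_above_def)
  have "S \<noteq> UNIV" using S(2) not_bounded_UNIV by blast
  then obtain z where z: "z \<in> frontier S" using frontier_not_empty[OF S(3)] by blast
  then have nontrivial: "at z within S \<noteq> bot"
    using S(1) by (simp add: frontier_def interior_open islimpt_in_closure trivial_limit_within)
  have "\<forall>\<^sub>F x in at z within S. M < u x"
    using blowup z by (simp add: filterlim_at_top_dense)
  moreover have "\<forall>\<^sub>F x in at z within S. x \<in> S"
    by (simp add: eventually_at_filter)
  ultimately have "\<forall>\<^sub>F x in at z within S. False"
    by eventually_elim (use M in force)
  with nontrivial show False by (simp add: eventually_False)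
qed

lemma polynomial_bound_of_Limsup:
  fixes f :: "real \<Rightarrow> real"
  assumes f_bdd: "\<And>t. bdd_above (f ` {..t})"
    and f_growth: "Limsup at_top (\<lambda>s. ereal (f s / s ^ n)) < \<infinity>"
  obtains C where "\<And>s. f s \<le> C * (\<bar>s\<bar> + 1) ^ n"
proof -
  obtain m :: nat where "Limsup at_top (\<lambda>s. ereal (f s / s ^ n)) < ereal (real m)"
    using f_growth less_PInf_Ex_of_nat by auto
  then have "\<forall>\<^sub>F s in at_top. ereal (f s / s ^ n) < ereal (real m)"
    by (rule Limsup_lessD)
  then obtain s0 where s0: "\<And>s. s \<ge> s0 \<Longrightarrow> f s / s ^ n < real m"
    by (auto simp: eventually_at_top_linorder)
  obtain A where A: "\<And>s. s \<le> max s0 1 \<Longrightarrow> f s \<le> A"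
    using f_bdd[of "max s0 1"] by (auto simp: bdd_above_def)
  have "f s \<le> (\<bar>A\<bar> + m) * (\<bar>s\<bar> + 1) ^ n" for s
  proof (cases "s \<le> max s0 1")
    case True
    then have "f s \<le> (\<bar>A\<bar> + m) * 1" using A[OF True] by simp
    also have "\<dots> \<le> (\<bar>A\<bar> + m) * (\<bar>s\<bar> + 1) ^ n"
      by (intro mult_left_mono one_le_power) auto
    finally show ?thesis .
  next
    case False
    then have s: "s > 1" "s \<ge> s0" by auto
    then have "f s < m * s ^ n" using s0[of s] by (simp add: divide_less_eq)
    also have "\<dots> \<le> (\<bar>A\<bar> + m) * (\<bar>s\<bar> + 1) ^ n"
      using s by (intro mult_mono power_mono) auto
    finally show ?thesis by simp
  qed
  then show ?thesis by (rule that)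
qed

lemma pd_has_real_derivative:
  assumes "(\<lambda>s. g ((y + t *\<^sub>R axis i 1) + s *\<^sub>R axis i 1)) differentiable (at 0)"
  shows "((\<lambda>t. g (y + t *\<^sub>R axis i 1)) has_real_derivative pd i g (y + t *\<^sub>R axis i 1)) (at t)"
proof -
  have "((\<lambda>s. g ((y + t *\<^sub>R axis i 1) + s *\<^sub>R axis i 1)) has_real_derivative
      pd i g (y + t *\<^sub>R axis i 1)) (at 0)"
    using assms unfolding pd_def by (simp add: DERIV_deriv_iff_real_differentiable)
  then have "((\<lambda>s. g (y + (s + t) *\<^sub>R axis i 1)) has_real_derivative
      pd i g (y + t *\<^sub>R axis i 1)) (at 0)"
    by (simp add: algebra_simps)
  then show ?thesis using DERIV_shift[of "\<lambda>t. g (y + t *\<^sub>R axis i 1)" _ 0 t] by simp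
qed

lemma increment_along_axis_bound:
  fixes g :: "real^'n::finite \<Rightarrow> real"
  assumes dif: "\<And>t. t \<in> closed_segment 0 s \<Longrightarrow>
      (\<lambda>r. g ((z + t *\<^sub>R axis i 1) + r *\<^sub>R axis i 1)) differentiable (at 0)"
    and bnd: "\<And>t. t \<in> closed_segment 0 s \<Longrightarrow> \<bar>pd i g (z + t *\<^sub>R axis i 1) - c\<bar> \<le> e"
  shows "\<bar>g (z + s *\<^sub>R axis i 1) - g z - c * s\<bar> \<le> e * \<bar>s\<bar>"
proof -
  define \<psi> where "\<psi> = (\<lambda>t. g (z + t *\<^sub>R axis i 1) - c * t)"
  define \<psi>' where "\<psi>' = (\<lambda>t r. (pd i g (z + t *\<^sub>R axis i 1) - c) * r)"
  have "(\<psi> has_derivative \<psi>' t) (at t within closed_segment 0 s)"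
    if "t \<in> closed_segment 0 s" for t
  proof -
    have "(\<psi> has_real_derivative pd i g (z + t *\<^sub>R axis i 1) - c) (at t)"
      unfolding \<psi>_def by (auto intro!: derivative_eq_intros pd_has_real_derivative dif[OF that])
    then show ?thesis
      by (auto simp: \<psi>'_def has_field_derivative_def intro: has_derivative_at_withinI)
  qed
  moreover have "onorm (\<psi>' t) \<le> e" if "t \<in> closed_segment 0 s" for t
    using bnd[OF that] by (intro onorm_le) (simp add: \<psi>'_def abs_mult mult_right_mono)
  ultimately have "norm (\<psi> s - \<psi> 0) \<le> e * norm (s - 0)"
    by (intro differentiable_bound[OF convex_closed_segment]) auto
  then show ?thesis by (simp add: \<psi>_def)
qed

lemma increment_bound_by_partials:
  fixes g :: "real^'n::finite \<Rightarrow> real"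
  assumes dif: "\<And>y i. y \<in> ball x d \<Longrightarrow> (\<lambda>t. g (y + t *\<^sub>R axis i 1)) differentiable (at 0)"
    and bnd: "\<And>y i. y \<in> ball x d \<Longrightarrow> \<bar>pd i g y - pd i g x\<bar> \<le> e"
    and h: "norm h < d"
  shows "\<bar>g (x + h) - g x - (\<Sum>i\<in>UNIV. pd i g x * h$i)\<bar> \<le> e * (\<Sum>i\<in>UNIV. \<bar>h$i\<bar>)"
proof -
  define hv where "hv = (\<lambda>A. \<chi> j. if j \<in> A then h$j else 0)"
  have telescope: "\<bar>g (x + hv A) - g x - (\<Sum>i\<in>A. pd i g x * h$i)\<bar> \<le> e * (\<Sum>i\<in>A. \<bar>h$i\<bar>)"
    if "finite A" for A
    using that
  proof (induction A rule: finite_induct)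
    case empty
    have "hv {} = 0" by (simp add: hv_def vec_eq_iff)
    then show ?case by simp
  next
    case (insert i A)
    define z where "z = x + hv A"
    have "x + hv (insert i A) = z + h$i *\<^sub>R axis i 1"
      using insert(2) by (auto simp: z_def hv_def vec_eq_iff axis_def)
    moreover have in_ball: "z + t *\<^sub>R axis i 1 \<in> ball x d" if "t \<in> closed_segment 0 (h$i)" for t
    proof -
      have "\<bar>t\<bar> \<le> \<bar>h$i\<bar>" using that by (auto simp: closed_segment_eq_real_ivl split: if_splits)
      then have "norm (z + t *\<^sub>R axis i 1 - x) \<le> norm h"
        using insert(2) by (intro norm_le_componentwise_cart) (auto simp: z_def hv_def axis_def)
      then show ?thesis using h by (simp add: dist_norm norm_minus_commute)
    qed
    ultimately have "\<bar>g (x + hv (insert i A)) - g z - pd i g x * h$i\<bar> \<le> e * \<bar>h$i\<bar>"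
      using dif bnd by (auto intro!: increment_along_axis_bound)
    with insert show ?case by (simp add: z_def algebra_simps)
  qed
  moreover have "hv UNIV = h" by (simp add: hv_def vec_eq_iff)
  ultimately show ?thesis using telescope[of UNIV] by simp
qed

lemma has_derivative_of_continuous_partials:
  fixes g :: "real^'n::finite \<Rightarrow> real"
  assumes S: "open S" and x: "x \<in> S"
    and dif: "\<And>y i. y \<in> S \<Longrightarrow> (\<lambda>t. g (y + t *\<^sub>R axis i 1)) differentiable (at 0)"
    and cont: "\<And>i. continuous_on S (pd i g)"
  shows "(g has_derivative (\<lambda>h. \<Sum>i\<in>UNIV. pd i g x * h$i)) (at x)"
  unfolding has_derivative_at_alt
proof (intro conjI allI impI)
  show "bounded_linear (\<lambda>h. \<Sum>i\<in>UNIV. pd i g x * h$i)"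
    by (intro bounded_linear_sum bounded_linear_mult_right[THEN bounded_linear_compose]
        bounded_linear_vec_nth)
next
  fix \<epsilon> :: real assume "\<epsilon> > 0"
  define e where "e = \<epsilon> / CARD('n)"
  have "e > 0" using \<open>\<epsilon> > 0\<close> by (simp add: e_def)
  have "\<forall>\<^sub>F y in nhds x. dist (pd i g y) (pd i g x) < e" for i
    using cont[of i] S x \<open>e > 0\<close>
    by (metis continuous_on_eq_continuous_at isCont_def tendsto_at_iff_tendsto_nhds tendstoD)
  then have "\<forall>\<^sub>F y in nhds x. \<forall>i. dist (pd i g y) (pd i g x) < e"
    by (intro eventually_all_finite) auto
  then have "\<forall>\<^sub>F y in nhds x. y \<in> S \<and> (\<forall>i. dist (pd i g y) (pd i g x) < e)"
    by (intro eventually_conj eventually_nhds_in_open[OF S x])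
  then obtain d where "d > 0" and d: "\<And>y. dist y x < d \<Longrightarrow> y \<in> S \<and> (\<forall>i. dist (pd i g y) (pd i g x) < e)"
    unfolding eventually_nhds_metric by blast
  show "\<exists>d>0. \<forall>y. norm (y - x) < d \<longrightarrow>
      norm (g y - g x - (\<Sum>i\<in>UNIV. pd i g x * (y - x)$i)) \<le> \<epsilon> * norm (y - x)"
  proof (intro exI[of _ d] conjI allI impI \<open>d > 0\<close>)
    fix y assume y: "norm (y - x) < d"
    have "\<bar>g (x + (y - x)) - g x - (\<Sum>i\<in>UNIV. pd i g x * (y - x)$i)\<bar>
        \<le> e * (\<Sum>i\<in>UNIV. \<bar>(y - x)$i\<bar>)"
      using d y by (intro increment_bound_by_partials[where d = d] dif)
        (auto simp: dist_commute dist_real_def less_imp_le)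
    also have "\<dots> \<le> e * (\<Sum>i\<in>(UNIV::'n set). norm (y - x))"
      using \<open>e > 0\<close> by (intro mult_left_mono sum_mono)
        (metis component_le_norm_cart real_norm_def, simp)
    also have "\<dots> = \<epsilon> * norm (y - x)" by (simp add: e_def)
    finally show "norm (g y - g x - (\<Sum>i\<in>UNIV. pd i g x * (y - x)$i)) \<le> \<epsilon> * norm (y - x)"
      by simp
  qed
qed

lemma has_derivative_vec_componentwise:
  fixes F :: "'a::real_normed_vector \<Rightarrow> real^'n::finite"
  assumes "\<And>j. ((\<lambda>x. F x $ j) has_derivative (\<lambda>h. F' h $ j)) (at a)"
  shows "(F has_derivative F') (at a)"
  using assms has_derivative_componentwise_within[of F F' a UNIV]
  by (auto simp: Basis_vec_def cart_eq_inner_axis[symmetric])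

definition grad :: "(real^'n::finite \<Rightarrow> real) \<Rightarrow> real^'n \<Rightarrow> real^'n" where
  "grad u x = (\<chi> i. pd i u x)"

lemma Ck_on_2_partials:
  assumes "Ck_on 2 S u"
  shows "\<And>y i. y \<in> S \<Longrightarrow> (\<lambda>t. u (y + t *\<^sub>R axis i 1)) differentiable (at 0)"
    and "\<And>y i j. y \<in> S \<Longrightarrow> (\<lambda>t. pd j u (y + t *\<^sub>R axis i 1)) differentiable (at 0)"
    and "\<And>i. continuous_on S (pd i u)"
    and "\<And>i j. continuous_on S (pd i (pd j u))"
proof -
  have c: "continuous_on S (iter_pd is u)" if "length is \<le> 2" for "is"
    using assms that by (simp add: Ck_on_def)
  have d: "(\<lambda>t. iter_pd is u (y + t *\<^sub>R axis i 1)) differentiable (at 0)"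
    if "length is < 2" "y \<in> S" for "is" i y
    using assms that by (simp add: Ck_on_def)
  show "\<And>y i. y \<in> S \<Longrightarrow> (\<lambda>t. u (y + t *\<^sub>R axis i 1)) differentiable (at 0)"
    using d[of "[]"] by simp
  show "\<And>y i j. y \<in> S \<Longrightarrow> (\<lambda>t. pd j u (y + t *\<^sub>R axis i 1)) differentiable (at 0)"
    using d[of "[j]" for j] by simp
  show "\<And>i. continuous_on S (pd i u)"
    using c[of "[i]" for i] by simp
  show "\<And>i j. continuous_on S (pd i (pd j u))"
    using c[of "[i, j]" for i j] by simp
qed

lemma Ck_on_2_has_derivative_grad:
  fixes u :: "real^'n::finite \<Rightarrow> real"
  assumes S: "open S" and C2: "Ck_on 2 S u" and x: "x \<in> S"
  shows "(u has_derivative (\<lambda>h. grad u x \<bullet> h)) (at x)"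
proof -
  have "(u has_derivative (\<lambda>h. \<Sum>i\<in>UNIV. pd i u x * h$i)) (at x)"
    using Ck_on_2_partials[OF C2] by (intro has_derivative_of_continuous_partials[OF S x])
  then show ?thesis by (simp add: grad_def inner_vec_def mult.commute)
qed

lemma Ck_on_2_has_derivative_hessian:
  fixes u :: "real^'n::finite \<Rightarrow> real"
  assumes S: "open S" and C2: "Ck_on 2 S u" and x: "x \<in> S"
  shows "(grad u has_derivative (\<lambda>h. transpose (hessian u x) *v h)) (at x)"
proof (rule has_derivative_vec_componentwise)
  fix j
  have "(pd j u has_derivative (\<lambda>h. \<Sum>i\<in>UNIV. pd i (pd j u) x * h$i)) (at x)"
    using Ck_on_2_partials[OF C2] by (intro has_derivative_of_continuous_partials[OF S x])
  then show "((\<lambda>x. grad u x $ j) has_derivative (\<lambda>h. (transpose (hessian u x) *v h) $ j)) (at x)"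
    by (simp add: grad_def hessian_def transpose_def matrix_vector_mult_def)
qed

text \<open>A bijection \<open>b\<close> between index types identifies \<open>real^'m\<close> with
  \<open>real^'n \<times> real^'k\<close>.\<close>

definition vec_left :: "('n::finite + 'k::finite \<Rightarrow> 'm::finite) \<Rightarrow> real^'m \<Rightarrow> real^'n" where
  "vec_left b z = (\<chi> i. z $ b (Inl i))"

definition vec_right :: "('n::finite + 'k::finite \<Rightarrow> 'm::finite) \<Rightarrow> real^'m \<Rightarrow> real^'k" where
  "vec_right b z = (\<chi> j. z $ b (Inr j))"

definition vec_join :: "('n::finite + 'k::finite \<Rightarrow> 'm::finite) \<Rightarrow> real^'n \<Rightarrow> real^'k \<Rightarrow> real^'m" where
  "vec_join b x y = (\<chi> m. case inv b m of Inl i \<Rightarrow> x $ i | Inr j \<Rightarrow> y $ j)"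

lemma vec_eq_blockwise:
  fixes b :: "'n::finite + 'k::finite \<Rightarrow> 'm::finite"
  assumes "bij b" "\<And>i. z $ b (Inl i) = w $ b (Inl i)" "\<And>j. z $ b (Inr j) = w $ b (Inr j)"
  shows "z = w"
proof (rule vec_eq_iff[THEN iffD2], rule allI)
  fix m
  show "z $ m = w $ m"
    using assms by (cases "inv b m") (metis bij_inv_eq_iff)+
qed

lemma vec_join_nth [simp]:
  assumes "bij b"
  shows "vec_join b x y $ b (Inl i) = x $ i" and "vec_join b x y $ b (Inr j) = y $ j"
  using assms by (simp_all add: vec_join_def bij_def inv_f_f)

lemma vec_left_nth [simp]: "vec_left b z $ i = z $ b (Inl i)"
  and vec_right_nth [simp]: "vec_right b z $ j = z $ b (Inr j)"
  by (simp_all add: vec_left_def vec_right_def)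

lemma vec_join_inverse [simp]:
  assumes "bij b"
  shows "vec_left b (vec_join b x y) = x" and "vec_right b (vec_join b x y) = y"
    and "vec_join b (vec_left b z) (vec_right b z) = z"
proof -
  show "vec_left b (vec_join b x y) = x" "vec_right b (vec_join b x y) = y"
    using assms by (simp_all add: vec_eq_iff)
  show "vec_join b (vec_left b z) (vec_right b z) = z"
    by (intro vec_eq_blockwise[OF assms]) (simp_all add: assms)
qed

lemma linear_vec_left: "linear (vec_left b)"
  and linear_vec_right: "linear (vec_right b)"
  by (auto intro!: linearI simp: vec_eq_iff)

lemma linear_vec_join:
  assumes "linear f" "linear g"
  shows "linear (\<lambda>h. vec_join b (f h) (g h))"
  using assms by (auto intro!: linearI simp: vec_join_def vec_eq_iff linear_add linear_scale
      split: sum.splits)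

lemma inner_vec_join:
  assumes b: "bij b"
  shows "vec_join b x y \<bullet> h = x \<bullet> vec_left b h + y \<bullet> vec_right b h"
proof -
  have "vec_join b x y \<bullet> h = (\<Sum>s\<in>UNIV. vec_join b x y $ b s * h $ b s)"
    using b by (simp add: inner_vec_def sum.reindex_bij_betw[symmetric, of b UNIV UNIV]
        bij_betw_def bij_def)
  also have "\<dots> = x \<bullet> vec_left b h + y \<bullet> vec_right b h"
    using b by (simp flip: UNIV_Plus_UNIV add: sum.Plus inner_vec_def)
  finally show ?thesis .
qed

lemma has_derivative_vec_join:
  assumes b: "bij b"
    and "(f has_derivative f') (at z)" "(g has_derivative g') (at z)"
  shows "((\<lambda>z. vec_join b (f z) (g z)) has_derivative (\<lambda>h. vec_join b (f' h) (g' h))) (at z)"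
proof (rule has_derivative_vec_componentwise)
  fix m
  show "((\<lambda>z. vec_join b (f z) (g z) $ m) has_derivative (\<lambda>h. vec_join b (f' h) (g' h) $ m)) (at z)"
    using assms by (cases "inv b m")
      (auto simp: vec_join_def intro: bounded_linear_vec_nth[THEN bounded_linear.has_derivative])
qed

lemma isCont_vec_left: "isCont (vec_left b) z"
  and isCont_vec_right: "isCont (vec_right b) z"
  using linear_vec_left[of b] linear_vec_right[of b]
  by (auto simp: linear_conv_bounded_linear intro: linear_continuous_at)

lemma has_derivative_vec_left_comp:
  "(f has_derivative f') (at (vec_left b z)) \<Longrightarrow>
    ((\<lambda>z. f (vec_left b z)) has_derivative (\<lambda>h. f' (vec_left b h))) (at z)"
  by (rule has_derivative_compose[OF linear_imp_has_derivative[OF linear_vec_left]])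

lemma has_derivative_vec_right_comp:
  "(f has_derivative f') (at (vec_right b z)) \<Longrightarrow>
    ((\<lambda>z. f (vec_right b z)) has_derivative (\<lambda>h. f' (vec_right b h))) (at z)"
  by (rule has_derivative_compose[OF linear_imp_has_derivative[OF linear_vec_right]])

lemma bounded_vimage_vec_left_right:
  assumes b: "bij b" and \<Omega>: "bounded \<Omega>"
  shows "bounded (vec_left b -` \<Omega> \<inter> vec_right b -` \<Omega>)"
proof -
  have "linear (\<lambda>p. vec_join b (fst p) (snd p))"
    by (intro linear_vec_join linear_fst linear_snd)
  then have "bounded ((\<lambda>p. vec_join b (fst p) (snd p)) ` (\<Omega> \<times> \<Omega>))"
    using \<Omega> by (intro bounded_linear_image bounded_Times) (auto simp: linear_conv_bounded_linear)
  moreover have "vec_left b -` \<Omega> \<inter> vec_right b -` \<Omega> \<subseteq> (\<lambda>p. vec_join b (fst p) (snd p)) ` (\<Omega> \<times> \<Omega>)"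
    using b by (force intro: image_eqI[of _ _ "(vec_left b z, vec_right b z)" for z])
  ultimately show ?thesis by (rule bounded_subset)
qed

lemma det_matrix_zero_component:
  fixes f :: "real^'m::finite \<Rightarrow> real^'m"
  assumes "\<And>x. f x $ i = 0"
  shows "det (matrix f) = 0"
proof -
  have "row i (matrix f) = 0" using assms by (simp add: row_def matrix_def vec_eq_iff)
  then show ?thesis by (rule det_zero_row)
qed

lemma det_shear:
  fixes v :: "real^'m::finite"
  assumes "v $ k = 0"
  shows "det (matrix (\<lambda>w. w + (w $ k) *\<^sub>R v)) = 1"
proof -
  define M where "M = matrix (\<lambda>w::real^'m. w + (w $ k) *\<^sub>R v)"
  have T: "transpose M = (\<chi> r. if r = k then row k (mat 1) + v else row r (mat 1))"
    using assms by (auto simp: M_def transpose_def matrix_def row_def vec_eq_iff mat_def axis_def)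
  have "v = (\<Sum>j\<in>UNIV - {k}. v $ j *s row j (mat 1 :: real^'m^'m))"
    using assms by (auto simp: vec_eq_iff row_def mat_def sum_component if_distrib
        sum.delta_remove cong: if_cong)
  also have "\<dots> \<in> vec.span {row j (mat 1 :: real^'m^'m) |j. j \<noteq> k}"
    by (intro vec.span_sum vec.span_scale vec.span_base) auto
  finally have "det (transpose M) = 1"
    unfolding T by (subst det_row_span) auto
  then show ?thesis by (simp add: M_def)
qed

lemma det_matrix_swap:
  fixes m n :: "'m::finite"
  assumes "m \<noteq> n"
  shows "det (matrix (\<lambda>x::real^'m. \<chi> i. x $ Transposition.transpose m n i)) = -1"
proof -
  have "matrix (\<lambda>x::real^'m. \<chi> i. x $ Transposition.transpose m n i)
      = (\<chi> i. (mat 1 :: real^'m^'m) $ Transposition.transpose m n i)"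
    by (simp add: matrix_def mat_def axis_def vec_eq_iff)
  also have "det \<dots> = of_int (sign (Transposition.transpose m n)) * det (mat 1 :: real^'m^'m)"
    by (rule det_permute_rows, rule permutes_swap_id) auto
  finally show ?thesis using assms by (simp add: sign_swap_id)
qed

lemma det_matrix_add_row:
  fixes m n :: "'m::finite"
  assumes "m \<noteq> n"
  shows "det (matrix (\<lambda>x::real^'m. \<chi> i. if i = m then x $ m + x $ n else x $ i)) = 1"
proof -
  have "(\<lambda>x::real^'m. \<chi> i. if i = m then x $ m + x $ n else x $ i) = (\<lambda>w. w + (w $ n) *\<^sub>R axis m 1)"
    by (auto simp: vec_eq_iff axis_def)
  then show ?thesis using assms by (simp add: det_shear axis_def)
qed

lemma det_vec_join_left:
  fixes b :: "'n::finite + 'k::finite \<Rightarrow> 'm::finite" and L :: "real^'n \<Rightarrow> real^'n"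
  assumes b: "bij b" and L: "linear L"
  shows "det (matrix (\<lambda>h. vec_join b (L (vec_left b h)) (vec_right b h))) = det (matrix L)"
  using L
proof (induction rule: induct_linear_elementary[consumes 1, case_names comp zeroes const swap idplus])
  case (comp f g)
  have lin: "linear (\<lambda>h. vec_join b (f (vec_left b h)) (vec_right b h))"
    "linear (\<lambda>h. vec_join b (g (vec_left b h)) (vec_right b h))"
    using comp(1,2) by (auto intro!: linear_vec_join linear_vec_right
        linear_compose[OF linear_vec_left, unfolded o_def])
  have "(\<lambda>h. vec_join b ((f \<circ> g) (vec_left b h)) (vec_right b h))
      = (\<lambda>h. vec_join b (f (vec_left b h)) (vec_right b h)) \<circ>
        (\<lambda>h. vec_join b (g (vec_left b h)) (vec_right b h))"
    using b by (simp add: o_def)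
  then show ?case
    using comp by (simp add: matrix_compose[OF lin(2) lin(1)] matrix_compose[OF comp(2,1), unfolded comp_def] det_mul)
next
  case (zeroes f i)
  have "det (matrix (\<lambda>h. vec_join b (f (vec_left b h)) (vec_right b h))) = 0"
    using b zeroes(2) by (intro det_matrix_zero_component[of _ "b (Inl i)"]) simp
  moreover have "det (matrix f) = 0" using zeroes(2) by (rule det_matrix_zero_component)
  ultimately show ?case by simp
next
  case (const c)
  define c' where "c' = (\<lambda>m. case inv b m of Inl i \<Rightarrow> c i | Inr j \<Rightarrow> 1)"
  have "(\<lambda>h. vec_join b ((\<lambda>x. \<chi> i. c i * x $ i) (vec_left b h)) (vec_right b h))
      = (\<lambda>h. \<chi> m. c' m * h $ m)"
    using b by (auto intro!: vec_eq_blockwise simp: c'_def bij_def inv_f_f)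
  moreover have "prod c' UNIV = prod c UNIV"
  proof -
    have "prod c' UNIV = prod (c' \<circ> b) UNIV"
      using b by (simp add: prod.reindex_bij_betw[symmetric] bij_betw_def bij_def o_def)
    also have "\<dots> = prod (c' \<circ> b \<circ> Inl) UNIV * prod (c' \<circ> b \<circ> Inr) UNIV"
      by (simp flip: UNIV_Plus_UNIV add: prod.Plus)
    also have "\<dots> = prod c UNIV"
      using b by (simp add: c'_def o_def bij_def inv_f_f)
    finally show ?thesis .
  qed
  ultimately show ?case by (simp add: det_diagonal matrix_def axis_def)
next
  case (swap m n)
  then have "b (Inl m) \<noteq> b (Inl n)" using b by (simp add: bij_def inj_eq)
  moreover have "(\<lambda>h. vec_join b ((\<lambda>x. \<chi> i. x $ Transposition.transpose m n i) (vec_left b h))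
        (vec_right b h))
      = (\<lambda>h. \<chi> i. h $ Transposition.transpose (b (Inl m)) (b (Inl n)) i)"
    using b by (auto intro!: vec_eq_blockwise simp: Transposition.transpose_def bij_def inj_eq)
  ultimately show ?case using swap by (simp add: det_matrix_swap)
next
  case (idplus m n)
  then have "b (Inl m) \<noteq> b (Inl n)" using b by (simp add: bij_def inj_eq)
  moreover have "(\<lambda>h. vec_join b ((\<lambda>x. \<chi> i. if i = m then x $ m + x $ n else x $ i) (vec_left b h))
        (vec_right b h))
      = (\<lambda>h. \<chi> i. if i = b (Inl m) then h $ b (Inl m) + h $ b (Inl n) else h $ i)"
    using b by (auto intro!: vec_eq_blockwise simp: bij_def inj_eq)
  ultimately show ?case using idplus by (simp add: det_matrix_add_row)
qed

lemma det_vec_join_right: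
  fixes b :: "'n::finite + 'k::finite \<Rightarrow> 'm::finite" and L :: "real^'k \<Rightarrow> real^'k"
  assumes b: "bij b" and L: "linear L"
  shows "det (matrix (\<lambda>h. vec_join b (vec_left b h) (L (vec_right b h)))) = det (matrix L)"
proof -
  define b' where "b' = b \<circ> case_sum Inr Inl"
  have "bij (case_sum Inr Inl :: 'k + 'n \<Rightarrow> 'n + 'k)"
    by (rule o_bij[of "case_sum Inr Inl"]) (auto simp: fun_eq_iff split: sum.splits)
  then have b': "bij b'" unfolding b'_def using b by (rule bij_comp)
  have "vec_join b' y x $ b (Inl i) = x $ i" "vec_join b' y x $ b (Inr j) = y $ j" for x y i j
    using vec_join_nth[OF b', of y x] by (simp_all add: b'_def)
  then have "vec_join b' y x = vec_join b x y" for x y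
    using b by (intro vec_eq_blockwise[OF b]) simp_all
  moreover have "vec_left b' h = vec_right b h" "vec_right b' h = vec_left b h" for h
    by (simp_all add: vec_eq_iff b'_def)
  ultimately have "vec_join b (vec_left b h) (L (vec_right b h))
      = vec_join b' (L (vec_left b' h)) (vec_right b' h)" for h
    by simp
  then show ?thesis using det_vec_join_left[OF b' L] by simp
qed

lemma det_vec_join:
  fixes b :: "'n::finite + 'k::finite \<Rightarrow> 'm::finite"
    and L1 :: "real^'n \<Rightarrow> real^'n" and L2 :: "real^'k \<Rightarrow> real^'k"
  assumes b: "bij b" and L1: "linear L1" and L2: "linear L2"
  shows "det (matrix (\<lambda>h. vec_join b (L1 (vec_left b h)) (L2 (vec_right b h))))
    = det (matrix L1) * det (matrix L2)"
proof -
  have lin: "linear (\<lambda>h. vec_join b (L1 (vec_left b h)) (vec_right b h))"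
      "linear (\<lambda>h. vec_join b (vec_left b h) (L2 (vec_right b h)))"
    using L1 L2 by (auto intro!: linear_vec_join linear_vec_left linear_vec_right
        linear_compose[OF linear_vec_left, unfolded o_def]
        linear_compose[OF linear_vec_right, unfolded o_def])
  have "(\<lambda>h. vec_join b (L1 (vec_left b h)) (L2 (vec_right b h)))
      = (\<lambda>h. vec_join b (L1 (vec_left b h)) (vec_right b h)) \<circ>
        (\<lambda>h. vec_join b (vec_left b h) (L2 (vec_right b h)))"
    using b by (simp add: o_def)
  then show ?thesis
    by (simp add: matrix_compose[OF lin(2) lin(1)] det_mul det_vec_join_left[OF b L1]
        det_vec_join_right[OF b L2])
qed

text \<open>If \<open>W(y) - q \<bullet> y\<close> is minimal at \<open>y\<close>, then \<open>W(y) - W(x) \<le> q \<bullet> (y - x)\<close>, and the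
  tangent plane at \<open>x\<close> bounds the \<open>G x\<close>-part of \<open>q\<close> by \<open>\<mu> (W y - W x)\<close>.\<close>
lemma tilted_gradient_in_sublevel_image:
  fixes W :: "'a::euclidean_space \<Rightarrow> real"
  assumes P: "open P" "bounded P" and cvx: "convex_on P W"
    and dW: "\<And>x. x \<in> P \<Longrightarrow> (W has_derivative (\<lambda>h. G x \<bullet> h)) (at x)"
    and closed_sublevel: "\<And>c. closed {x\<in>P. W x \<le> c}"
    and x: "x \<in> P" and \<mu>: "0 \<le> \<mu>" "\<mu> \<le> 1/2" and e: "norm e * diameter P \<le> \<tau> / 4"
    and "0 < \<tau>"
  shows "\<mu> *\<^sub>R G x + e \<in> G ` {y\<in>P. W y < W x + \<tau>}"
proof -
  define q where "q = \<mu> *\<^sub>R G x + e"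
  obtain y where y: "y \<in> P" "G y = q" and y_min: "W y - q \<bullet> y \<le> W x - q \<bullet> x"
    using exists_tilted_minimizer[OF P x dW closed_sublevel, of q] x by metis
  have "e \<bullet> (y - x) \<le> norm e * diameter P"
    using norm_cauchy_schwarz[of e "y - x"] diameter_bounded_bound[OF P(2) y(1) x]
    by (smt (verit, best) dist_norm mult_left_mono norm_ge_zero)
  moreover have "\<mu> * (G x \<bullet> (y - x)) \<le> \<mu> * (W y - W x)"
    using convex_on_imp_above_tangent_plane[OF cvx dW[OF x] x y(1)] \<mu> by (simp add: mult_left_mono)
  ultimately have "W y - W x \<le> \<mu> * (W y - W x) + \<tau> / 4"
    using y_min e by (simp add: q_def inner_add_left inner_diff_right algebra_simps)
  moreover have "\<mu> * (W y - W x) \<le> 1/2 * (W y - W x)" if "W y \<ge> W x"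
    using \<mu> that by (intro mult_right_mono) auto
  ultimately have "W y < W x + \<tau>" using \<open>0 < \<tau>\<close> by fastforce
  with y show ?thesis unfolding q_def by (metis (mono_tags, lifting) image_eqI mem_Collect_eq)
qed

lemma exists_max_abs_component:
  fixes p :: "real^'m::finite"
  obtains k where "\<And>j. \<bar>p $ j\<bar> \<le> \<bar>p $ k\<bar>" and "norm p \<le> CARD('m) * \<bar>p $ k\<bar>"
proof -
  have "Max (range (\<lambda>j. \<bar>p $ j\<bar>)) \<in> range (\<lambda>j. \<bar>p $ j\<bar>)" by (intro Max_in) auto
  then obtain k where "Max (range (\<lambda>j. \<bar>p $ j\<bar>)) = \<bar>p $ k\<bar>" by (rule rangeE)
  from this[symmetric] have k: "\<bar>p $ j\<bar> \<le> \<bar>p $ k\<bar>" for j by (simp add: Max_ge)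
  have "norm p \<le> (\<Sum>j\<in>UNIV. \<bar>p $ j\<bar>)" by (rule norm_le_l1_cart)
  also have "\<dots> \<le> (\<Sum>j\<in>(UNIV::'m set). \<bar>p $ k\<bar>)" by (intro sum_mono k)
  finally show ?thesis by (intro that[of k] k) simp
qed

text \<open>A sheared box of volume \<open>\<bar>p$k\<bar>/2 \<cdot> (2\<epsilon>)^(N-1)\<close> fits into the tube
  \<open>{\<mu> p + e | 0 \<le> \<mu> \<le> 1/2, |e| \<le> N \<epsilon>}\<close> around the segment \<open>[0, p/2]\<close>.\<close>
lemma tube_contains_measurable_set:
  fixes p :: "real^'m::{finite,wellorder}" and \<epsilon> :: real
  assumes "\<epsilon> > 0"
  obtains T where "T \<in> lmeasurable"
    and "norm p / (2 * CARD('m)) * (2 * \<epsilon>) ^ (CARD('m) - 1) \<le> measure lebesgue T"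
    and "\<And>q. q \<in> T \<Longrightarrow> \<exists>\<mu> e. q = \<mu> *\<^sub>R p + e \<and> 0 \<le> \<mu> \<and> \<mu> \<le> 1/2 \<and> norm e \<le> CARD('m) * \<epsilon>"
proof (cases "p = 0")
  case True
  then show ?thesis by (intro that[of "{}"]) auto
next
  case False
  define N where "N = CARD('m)"
  obtain k where k: "\<And>j. \<bar>p $ j\<bar> \<le> \<bar>p $ k\<bar>" and norm_p: "norm p \<le> N * \<bar>p $ k\<bar>"
    using exists_max_abs_component unfolding N_def by blast
  then have pk: "p $ k \<noteq> 0" using False by auto
  define a where "a = (\<chi> j. if j = k then min 0 (p $ k / 2) else - \<epsilon>)"
  define b where "b = (\<chi> j. if j = k then max 0 (p $ k / 2) else \<epsilon>)"
  define L where "L = (\<lambda>w. w + (w $ k) *\<^sub>R ((1 / p $ k) *\<^sub>R p - axis k 1))"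
  have linL: "linear L" unfolding L_def by (auto intro!: linearI simp: algebra_simps add_divide_distrib)
  have detL: "det (matrix L) = 1" unfolding L_def using pk by (intro det_shear) (simp add: axis_def)
  have box: "cbox a b \<noteq> {}" using \<open>\<epsilon> > 0\<close> by (auto simp: a_def b_def interval_ne_empty_cart)
  have "measure lebesgue (L ` cbox a b) = (\<Prod>j\<in>UNIV. b $ j - a $ j)"
    using measure_linear_image[OF linL, of "cbox a b"] detL content_cbox_cart[OF box] by simp
  also have "\<dots> = (b $ k - a $ k) * (\<Prod>j\<in>UNIV - {k}. 2 * \<epsilon>)"
    by (subst prod.remove[of _ k]) (auto simp: a_def b_def intro!: prod.cong)
  also have "b $ k - a $ k = \<bar>p $ k\<bar> / 2" by (simp add: a_def b_def max_def min_def)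
  also have "(\<Prod>j\<in>UNIV - {k}. 2 * \<epsilon>) = (2 * \<epsilon>) ^ (N - 1)"
    by (simp add: N_def card_Diff_singleton)
  finally have measure_box: "measure lebesgue (L ` cbox a b) = \<bar>p $ k\<bar> / 2 * (2 * \<epsilon>) ^ (N - 1)" .
  have "norm p / (2 * N) \<le> \<bar>p $ k\<bar> / 2"
    using norm_p by (simp add: N_def divide_simps mult.commute)
  then have "norm p / (2 * N) * (2 * \<epsilon>) ^ (N - 1) \<le> measure lebesgue (L ` cbox a b)"
    unfolding measure_box using \<open>\<epsilon> > 0\<close> by (intro mult_right_mono) auto
  moreover have "\<exists>\<mu> e. q = \<mu> *\<^sub>R p + e \<and> 0 \<le> \<mu> \<and> \<mu> \<le> 1/2 \<and> norm e \<le> N * \<epsilon>"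
    if "q \<in> L ` cbox a b" for q
  proof -
    obtain w where w: "w \<in> cbox a b" and q: "q = L w" using \<open>q \<in> L ` cbox a b\<close> by auto
    have w_bounds: "a $ j \<le> w $ j \<and> w $ j \<le> b $ j" for j using w by (simp add: mem_box_cart)
    define e where "e = w - (w $ k) *\<^sub>R axis k 1"
    have "q = (w $ k / p $ k) *\<^sub>R p + e"
      using pk by (simp add: q L_def e_def algebra_simps)
    moreover have "0 \<le> w $ k / p $ k \<and> w $ k / p $ k \<le> 1/2"
      using w_bounds[of k] pk by (cases "p $ k > 0") (auto simp: a_def b_def divide_simps)
    moreover have "norm e \<le> N * \<epsilon>"
    proof -
      have "\<bar>e $ j\<bar> \<le> \<epsilon>" for j
        using w_bounds[of j] \<open>\<epsilon> > 0\<close> by (cases "j = k") (auto simp: e_def a_def b_def axis_def)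
      then have "(\<Sum>j\<in>UNIV. \<bar>e $ j\<bar>) \<le> (\<Sum>j\<in>(UNIV::'m set). \<epsilon>)"
        by (intro sum_mono)
      then show ?thesis
        using norm_le_l1_cart[of e] by (simp add: N_def)
    qed
    ultimately show ?thesis by blast
  qed
  moreover have "L ` cbox a b \<in> lmeasurable"
    using measurable_linear_image[OF linL] by simp
  ultimately show ?thesis using that unfolding N_def by blast
qed

lemma measure_image_le_of_det_bound:
  fixes G :: "real^'m::{finite,wellorder} \<Rightarrow> real^'m::_"
  assumes S: "S \<in> lmeasurable"
    and dG: "\<And>x. x \<in> S \<Longrightarrow> (G has_derivative G' x) (at x within S)"
    and bound: "\<And>x. x \<in> S \<Longrightarrow> \<bar>det (matrix (G' x))\<bar> \<le> B"
  shows "G ` S \<in> lmeasurable" and "measure lebesgue (G ` S) \<le> B * measure lebesgue S"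
proof -
  have "(\<lambda>x. \<bar>det (matrix (G' x))\<bar>) integrable_on S"
  proof (rule measurable_bounded_by_integrable_imp_integrable)
    show "(\<lambda>x. \<bar>det (matrix (G' x))\<bar>) \<in> borel_measurable (lebesgue_on S)"
      using borel_measurable_det_Jacobian[OF fmeasurableD[OF S] dG] by measurable
  qed (use S bound in \<open>auto intro: integrable_on_const\<close>)
  then show "G ` S \<in> lmeasurable" and "measure lebesgue (G ` S) \<le> B * measure lebesgue S"
    using measurable_bounded_differentiable_image[OF S dG _ bound]
      measure_bounded_differentiable_image[OF S dG _ bound] by auto
qed

lemma scaled_power_bound:
  fixes a c \<tau> B :: real
  assumes "a * (\<tau> / c) ^ (N - 1) \<le> B * \<tau> ^ N" and "0 < \<tau>" "0 < c" "1 \<le> N"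
  shows "a \<le> B * c ^ (N - 1) * \<tau>"
proof -
  have "\<tau> ^ N = \<tau> ^ (N - 1) * \<tau>" using \<open>1 \<le> N\<close> by (metis le_add_diff_inverse2 power_add power_one_right)
  with assms(1) have "a * \<tau> ^ (N - 1) \<le> (B * c ^ (N - 1) * \<tau>) * \<tau> ^ (N - 1)"
    using \<open>0 < c\<close> by (simp add: power_divide divide_simps mult_ac)
  then show ?thesis using \<open>0 < \<tau>\<close> by simp
qed

lemma measure_gradient_image_sublevel_le:
  fixes W :: "real^'m::{finite,wellorder} \<Rightarrow> real"
  assumes P: "open P" "bounded P"
    and dW: "\<And>x. x \<in> P \<Longrightarrow> (W has_derivative (\<lambda>h. G x \<bullet> h)) (at x)"
    and dG: "\<And>x. x \<in> P \<Longrightarrow> (G has_derivative G' x) (at x)"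
    and det_growth: "\<And>x. x \<in> P \<Longrightarrow> \<bar>det (matrix (G' x))\<bar> \<le> C * (\<bar>W x\<bar> + 1) ^ CARD('m)"
    and M: "0 \<le> M" "\<And>y. y \<in> P \<Longrightarrow> W y < s \<Longrightarrow> \<bar>W y\<bar> + 1 \<le> M"
  shows "G ` {y\<in>P. W y < s} \<in> lmeasurable"
    and "measure lebesgue (G ` {y\<in>P. W y < s}) \<le> \<bar>C\<bar> * M ^ CARD('m) * measure lebesgue P"
proof -
  define S where "S = {y\<in>P. W y < s}"
  have "continuous_on P W"
    using dW by (meson continuous_at_imp_continuous_on has_derivative_continuous)
  then have "open (P \<inter> W -` {..<s})"
    using P(1) by (rule continuous_open_preimage) simp
  moreover have "P \<inter> W -` {..<s} = S" by (auto simp: S_def)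
  ultimately have "open S" by simp
  have "S \<subseteq> P" by (auto simp: S_def)
  have S: "S \<in> lmeasurable"
    by (rule lmeasurable_open[OF bounded_subset[OF P(2) \<open>S \<subseteq> P\<close>] \<open>open S\<close>])
  have "measure lebesgue S \<le> measure lebesgue P"
    using lmeasurable_open[OF P(2,1)] \<open>S \<subseteq> P\<close> S by (intro measure_mono_fmeasurable fmeasurableD)
  have det_S: "\<bar>det (matrix (G' y))\<bar> \<le> \<bar>C\<bar> * M ^ CARD('m)" if "y \<in> S" for y
  proof -
    have "C * (\<bar>W y\<bar> + 1) ^ CARD('m) \<le> \<bar>C\<bar> * M ^ CARD('m)"
      using M(2)[of y] that by (intro mult_mono power_mono) (auto simp: S_def)
    then show ?thesis using det_growth[of y] that by (simp add: S_def)
  qed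
  have dG_S: "(G has_derivative G' y) (at y within S)" if "y \<in> S" for y
    using dG that \<open>S \<subseteq> P\<close> by (blast intro: has_derivative_at_withinI)
  note GS = measure_image_le_of_det_bound[OF S dG_S det_S]
  show "G ` {y\<in>P. W y < s} \<in> lmeasurable" using GS(1) by (simp add: S_def)
  have "measure lebesgue (G ` S) \<le> \<bar>C\<bar> * M ^ CARD('m) * measure lebesgue P"
    using GS(2) \<open>measure lebesgue S \<le> measure lebesgue P\<close> \<open>0 \<le> M\<close>
    by (meson order_trans mult_left_mono abs_ge_zero zero_le_power zero_le_mult_iff)
  then show "measure lebesgue (G ` {y\<in>P. W y < s}) \<le> \<bar>C\<bar> * M ^ CARD('m) * measure lebesgue P"
    by (simp add: S_def)
qed

lemma convex_gradient_bound_of_det_growth: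
  fixes W :: "real^'m::{finite,wellorder} \<Rightarrow> real"
  assumes P: "open P" "bounded P"
    and cvx: "convex_on P W"
    and dW: "\<And>x. x \<in> P \<Longrightarrow> (W has_derivative (\<lambda>h. G x \<bullet> h)) (at x)"
    and dG: "\<And>x. x \<in> P \<Longrightarrow> (G has_derivative G' x) (at x)"
    and det_growth: "\<And>x. x \<in> P \<Longrightarrow> \<bar>det (matrix (G' x))\<bar> \<le> C * (\<bar>W x\<bar> + 1) ^ CARD('m)"
    and closed_sublevel: "\<And>c. closed {x\<in>P. W x \<le> c}"
    and lower: "\<And>x. x \<in> P \<Longrightarrow> - L \<le> W x" and "0 \<le> L"
  obtains K where "\<And>x. x \<in> P \<Longrightarrow> norm (G x) \<le> K * (W x + 2 * L + 1)"
proof -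
  define N where "N = CARD('m)"
  define D where "D = diameter P + 1"
  have "D > 0" using diameter_ge_0[OF P(2)] by (simp add: D_def)
  define B where "B = \<bar>C\<bar> * 2 ^ N * measure lebesgue P"
  define K where "K = 2 * N * B * (2 * D * N) ^ (N - 1)"
  have "norm (G x) \<le> K * (W x + 2 * L + 1)" if x: "x \<in> P" for x
  proof -
    define \<tau> where "\<tau> = W x + 2 * L + 1"
    have "\<tau> \<ge> 1" using lower[OF x] \<open>0 \<le> L\<close> by (simp add: \<tau>_def)
    define S where "S = {y\<in>P. W y < W x + \<tau>}"
    define \<epsilon> where "\<epsilon> = \<tau> / (4 * D * N)"
    have "\<epsilon> > 0" using \<open>\<tau> \<ge> 1\<close> \<open>D > 0\<close> by (simp add: \<epsilon>_def N_def)
    obtain T where T: "T \<in> lmeasurable"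
      and measure_T: "norm (G x) / (2 * N) * (2 * \<epsilon>) ^ (N - 1) \<le> measure lebesgue T"
      and tube: "\<And>q. q \<in> T \<Longrightarrow> \<exists>\<mu> e. q = \<mu> *\<^sub>R G x + e \<and> 0 \<le> \<mu> \<and> \<mu> \<le> 1/2 \<and> norm e \<le> N * \<epsilon>"
      using tube_contains_measurable_set[OF \<open>\<epsilon> > 0\<close>, of "G x"] unfolding N_def by blast
    have "T \<subseteq> G ` S"
    proof
      fix q assume "q \<in> T"
      then obtain \<mu> e where q: "q = \<mu> *\<^sub>R G x + e" and \<mu>: "0 \<le> \<mu>" "\<mu> \<le> 1/2"
        and e: "norm e \<le> N * \<epsilon>" using tube by blast
      have "norm e * diameter P \<le> N * \<epsilon> * D"
        using e diameter_ge_0[OF P(2)] \<open>\<epsilon> > 0\<close> by (intro mult_mono) (auto simp: D_def)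
      also have "\<dots> = \<tau> / 4" using \<open>D > 0\<close> by (simp add: \<epsilon>_def N_def)
      finally show "q \<in> G ` S"
        unfolding q S_def using \<open>\<tau> \<ge> 1\<close> \<mu>
        by (intro tilted_gradient_in_sublevel_image[OF P cvx dW closed_sublevel x]) auto
    qed
    have "\<bar>W y\<bar> + 1 \<le> 2 * \<tau>" if "y \<in> P" "W y < W x + \<tau>" for y
      using that lower[of y] lower[OF x] \<open>0 \<le> L\<close> by (auto simp: \<tau>_def)
    note GS = measure_gradient_image_sublevel_le[OF P dW dG det_growth _ this]
    have "norm (G x) / (2 * N) * (2 * \<epsilon>) ^ (N - 1) \<le> measure lebesgue (G ` S)"
      using measure_T measure_mono_fmeasurable[OF \<open>T \<subseteq> G ` S\<close> fmeasurableD[OF T]]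
        GS(1) \<open>\<tau> \<ge> 1\<close> unfolding S_def by fastforce
    also have "\<dots> \<le> \<bar>C\<bar> * (2 * \<tau>) ^ N * measure lebesgue P"
      using GS(2) \<open>\<tau> \<ge> 1\<close> unfolding S_def N_def by simp
    also have "\<dots> = B * \<tau> ^ N" by (simp add: B_def power_mult_distrib mult.left_commute)
    finally have "norm (G x) / (2 * N) * (\<tau> / (2 * D * N)) ^ (N - 1) \<le> B * \<tau> ^ N"
      by (simp add: \<epsilon>_def mult.assoc)
    then have "norm (G x) / (2 * N) \<le> B * (2 * D * N) ^ (N - 1) * \<tau>"
      using \<open>\<tau> \<ge> 1\<close> \<open>D > 0\<close> by (intro scaled_power_bound) (auto simp: N_def)
    then have "norm (G x) \<le> 2 * N * (B * (2 * D * N) ^ (N - 1) * \<tau>)"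
      by (simp add: N_def divide_simps mult.commute)
    then show ?thesis by (simp add: K_def B_def \<tau>_def mult_ac)
  qed
  then show ?thesis by (rule that)
qed

lemma bdd_above_of_log_Lipschitz:
  fixes V :: "'a::real_normed_vector \<Rightarrow> real"
  assumes P: "convex P" "bounded P"
    and dV: "\<And>x. x \<in> P \<Longrightarrow> (V has_derivative V' x) (at x within P)"
    and V: "\<And>x. x \<in> P \<Longrightarrow> 1 \<le> V x"
    and V': "\<And>x h. x \<in> P \<Longrightarrow> \<bar>V' x h\<bar> \<le> K * V x * norm h"
  shows "bdd_above (V ` P)"
proof (cases "P = {}")
  case False
  then obtain x0 where x0: "x0 \<in> P" by blast
  have "((\<lambda>x. ln (V x)) has_derivative (\<lambda>h. V' x h / V x)) (at x within P)" if "x \<in> P" for x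
    using V[OF that] dV[OF that] by (auto intro!: derivative_eq_intros simp: field_simps)
  moreover have "onorm (\<lambda>h. V' x h / V x) \<le> \<bar>K\<bar>" if "x \<in> P" for x
  proof (rule onorm_bound)
    fix h
    have "\<bar>V' x h\<bar> \<le> \<bar>K\<bar> * V x * norm h"
      using V'[OF that, of h] V[OF that] by (smt (verit) abs_ge_self mult_right_mono norm_ge_zero)
    then show "norm (V' x h / V x) \<le> \<bar>K\<bar> * norm h"
      using V[OF that] by (simp add: divide_simps mult.commute mult.left_commute)
  qed simp
  ultimately have "norm (ln (V y) - ln (V x0)) \<le> \<bar>K\<bar> * norm (y - x0)" if "y \<in> P" for y
    using that x0 by (intro differentiable_bound[OF P(1)])
  moreover have "norm (y - x0) \<le> diameter P" if "y \<in> P" for y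
    using diameter_bounded_bound[OF P(2) that x0] by (simp add: dist_norm)
  ultimately have "ln (V y) \<le> ln (V x0) + \<bar>K\<bar> * diameter P" if "y \<in> P" for y
    using that by (smt (verit) abs_ge_zero mult_left_mono real_norm_def)
  then have "V y \<le> exp (ln (V x0) + \<bar>K\<bar> * diameter P)" if "y \<in> P" for y
    using that V[OF that] by (metis exp_le_cancel_iff exp_ln less_le_trans zero_less_one)
  then show ?thesis by (rule bdd_aboveI2)
qed simp

lemma convex_bdd_above_of_det_growth:
  fixes W :: "real^'m::{finite,wellorder} \<Rightarrow> real"
  assumes P: "open P" "bounded P" "convex P"
    and cvx: "convex_on P W"
    and dW: "\<And>x. x \<in> P \<Longrightarrow> (W has_derivative (\<lambda>h. G x \<bullet> h)) (at x)"
    and dG: "\<And>x. x \<in> P \<Longrightarrow> (G has_derivative G' x) (at x)"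
    and det_growth: "\<And>x. x \<in> P \<Longrightarrow> \<bar>det (matrix (G' x))\<bar> \<le> C * (\<bar>W x\<bar> + 1) ^ CARD('m)"
    and closed_sublevel: "\<And>c. closed {x\<in>P. W x \<le> c}"
  shows "bdd_above (W ` P)"
proof (cases "P = {}")
  case False
  then obtain x0 where x0: "x0 \<in> P" by blast
  obtain m where m: "\<And>x. x \<in> P \<Longrightarrow> m \<le> W x"
    using convex_on_bdd_below[OF cvx P(2) x0 dW[OF x0]] by (auto simp: bdd_below_def)
  define L where "L = \<bar>m\<bar>"
  have L: "- L \<le> W x" if "x \<in> P" for x
    using m[OF that] abs_ge_self[of "- m"] by (simp add: L_def)
  obtain K where K: "\<And>x. x \<in> P \<Longrightarrow> norm (G x) \<le> K * (W x + 2 * L + 1)"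
    using convex_gradient_bound_of_det_growth[OF P(1,2) cvx dW dG det_growth closed_sublevel L]
    by (simp add: L_def) blast
  have "bdd_above ((\<lambda>x. W x + 2 * L + 1) ` P)"
  proof (rule bdd_above_of_log_Lipschitz[OF P(3,2)])
    show "((\<lambda>x. W x + 2 * L + 1) has_derivative (\<lambda>h. G x \<bullet> h)) (at x within P)" if "x \<in> P" for x
      by (rule has_derivative_at_withinI[OF has_derivative_add_const[OF has_derivative_add_const[OF dW[OF that]]]])
    show "1 \<le> W x + 2 * L + 1" if "x \<in> P" for x
      using L[OF that] by (simp add: L_def)
    show "\<bar>G x \<bullet> h\<bar> \<le> K * (W x + 2 * L + 1) * norm h" if "x \<in> P" for x h
      by (rule order_trans[OF Cauchy_Schwarz_ineq2 mult_right_mono[OF K[OF that] norm_ge_zero]])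
  qed
  then obtain M where "\<And>x. x \<in> P \<Longrightarrow> W x + 2 * L + 1 \<le> M"
    by (auto simp: bdd_above_def)
  then show ?thesis by (intro bdd_aboveI2[where M = "M - 2 * L - 1"]) force
qed simp

lemma abs_plus_one_le_of_lower_bounds:
  fixes a b L :: real
  assumes "- L \<le> a" "- L \<le> b" "0 \<le> L"
  shows "\<bar>a\<bar> + 1 \<le> (1 + L) * (\<bar>a + b\<bar> + 1)"
proof -
  have "\<bar>a\<bar> + 1 \<le> \<bar>a + b\<bar> + 1 + L" using assms by linarith
  also have "\<dots> \<le> (1 + L) * (\<bar>a + b\<bar> + 1)" using assms by (simp add: algebra_simps)
  finally show ?thesis .
qed

lemma closed_sublevel_vec_left_right_sum:
  fixes u :: "real^'n::finite \<Rightarrow> real"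
  assumes cont: "continuous_on \<Omega> u" and closed_sublevel: "\<And>c. closed {x\<in>\<Omega>. u x \<le> c}"
    and lower: "\<And>x. x \<in> \<Omega> \<Longrightarrow> - L \<le> u x"
  shows "closed {z \<in> vec_left b -` \<Omega> \<inter> vec_right b -` \<Omega>. u (vec_left b z) + u (vec_right b z) \<le> c}"
proof -
  define Z where "Z = vec_left b -` {x\<in>\<Omega>. u x \<le> c + L} \<inter> vec_right b -` {x\<in>\<Omega>. u x \<le> c + L}"
  have "{z \<in> vec_left b -` \<Omega> \<inter> vec_right b -` \<Omega>. u (vec_left b z) + u (vec_right b z) \<le> c}
      = Z \<inter> (\<lambda>z. u (vec_left b z) + u (vec_right b z)) -` {..c}"
    using lower by (force simp: Z_def)
  also have "closed \<dots>"
  proof (rule continuous_closed_preimage)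
    show "closed Z"
      unfolding Z_def
      by (intro closed_Int continuous_closed_vimage closed_sublevel isCont_vec_left isCont_vec_right)
    show "continuous_on Z (\<lambda>z. u (vec_left b z) + u (vec_right b z))"
      using cont unfolding Z_def
      by (intro continuous_on_add continuous_on_compose2[OF cont]
          linear_continuous_on[OF linear_vec_left[unfolded linear_conv_bounded_linear]]
          linear_continuous_on[OF linear_vec_right[unfolded linear_conv_bounded_linear]]) auto
  qed simp
  finally show ?thesis .
qed

lemma det_vec_join_growth:
  fixes b :: "'n::finite + 'n \<Rightarrow> 'm::finite"
  assumes b: "bij b" and lin: "linear H1" "linear H2"
    and H1: "\<bar>det (matrix H1)\<bar> \<le> C * (\<bar>a\<bar> + 1) ^ CARD('n)"
    and H2: "\<bar>det (matrix H2)\<bar> \<le> C * (\<bar>c\<bar> + 1) ^ CARD('n)"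
    and lower: "- L \<le> a" "- L \<le> c" "0 \<le> L"
  shows "\<bar>det (matrix (\<lambda>h. vec_join b (H1 (vec_left b h)) (H2 (vec_right b h))))\<bar>
    \<le> (\<bar>C\<bar> * (1 + L) ^ CARD('n))\<^sup>2 * (\<bar>a + c\<bar> + 1) ^ (2 * CARD('n))"
proof -
  define B where "B = \<bar>C\<bar> * (1 + L) ^ CARD('n) * (\<bar>a + c\<bar> + 1) ^ CARD('n)"
  have bound: "C * (\<bar>x\<bar> + 1) ^ CARD('n) \<le> B" if "\<bar>x\<bar> + 1 \<le> (1 + L) * (\<bar>a + c\<bar> + 1)" for x
  proof -
    have "C * (\<bar>x\<bar> + 1) ^ CARD('n) \<le> \<bar>C\<bar> * ((1 + L) * (\<bar>a + c\<bar> + 1)) ^ CARD('n)"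
      using that by (intro mult_mono power_mono) auto
    then show ?thesis by (simp add: B_def power_mult_distrib mult.assoc)
  qed
  have "\<bar>det (matrix H1)\<bar> \<le> B"
    using H1 bound[OF abs_plus_one_le_of_lower_bounds[OF lower]] by linarith
  moreover have "\<bar>det (matrix H2)\<bar> \<le> B"
    using H2 bound[OF abs_plus_one_le_of_lower_bounds[OF lower(2,1,3), unfolded add.commute[of c]]]
    by linarith
  ultimately have "\<bar>det (matrix H1)\<bar> * \<bar>det (matrix H2)\<bar> \<le> B\<^sup>2"
    unfolding power2_eq_square by (intro mult_mono) auto
  then show ?thesis
    using det_vec_join[OF b lin] by (simp add: abs_mult B_def power_mult_distrib power_mult[symmetric] mult.commute)
qed

text \<open>The change of variables formula of the library needs a well-ordered index type.
  We therefore apply \<open>convex_bdd_above_of_det_growth\<close> to \<open>W(x, y) = u(x) + u(y)\<close> on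
  \<open>\<Omega> \<times> \<Omega> \<subseteq> real^('n bit0)\<close>: its Hessian is block diagonal and still satisfies the
  growth bound, now in dimension \<open>2n\<close>.\<close>
lemma convex_bdd_above_of_hessian_growth:
  fixes u :: "real^'n::finite \<Rightarrow> real"
  assumes \<Omega>: "open \<Omega>" "bounded \<Omega>" "convex \<Omega>"
    and cvx: "convex_on \<Omega> u"
    and du: "\<And>x. x \<in> \<Omega> \<Longrightarrow> (u has_derivative (\<lambda>h. g x \<bullet> h)) (at x)"
    and dg: "\<And>x. x \<in> \<Omega> \<Longrightarrow> (g has_derivative H x) (at x)"
    and det_growth: "\<And>x. x \<in> \<Omega> \<Longrightarrow> \<bar>det (matrix (H x))\<bar> \<le> C * (\<bar>u x\<bar> + 1) ^ CARD('n)"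
    and closed_sublevel: "\<And>c. closed {x\<in>\<Omega>. u x \<le> c}"
  shows "bdd_above (u ` \<Omega>)"
proof (cases "\<Omega> = {}")
  case False
  then obtain x0 where x0: "x0 \<in> \<Omega>" by blast
  obtain m where m: "\<And>x. x \<in> \<Omega> \<Longrightarrow> m \<le> u x"
    using convex_on_bdd_below[OF cvx \<Omega>(2) x0 du[OF x0]] by (auto simp: bdd_below_def)
  define L where "L = \<bar>m\<bar>"
  have L: "- L \<le> u x" if "x \<in> \<Omega>" for x
    using m[OF that] abs_ge_self[of "- m"] by (simp add: L_def)
  have "0 \<le> L" by (simp add: L_def)
  obtain b :: "'n + 'n \<Rightarrow> 'n bit0" where b: "bij b"
    using finite_same_card_bij[of "UNIV :: ('n + 'n) set" "UNIV :: 'n bit0 set"]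
    by (auto simp: bij_def bij_betw_def card_UNIV_sum)
  define P where "P = vec_left b -` \<Omega> \<inter> vec_right b -` \<Omega>"
  define W where "W = (\<lambda>z. u (vec_left b z) + u (vec_right b z))"
  define G where "G = (\<lambda>z. vec_join b (g (vec_left b z)) (g (vec_right b z)))"
  define G' where "G' = (\<lambda>z h. vec_join b (H (vec_left b z) (vec_left b h)) (H (vec_right b z) (vec_right b h)))"
  have in_\<Omega>: "vec_left b z \<in> \<Omega>" "vec_right b z \<in> \<Omega>" if "z \<in> P" for z
    using that by (auto simp: P_def)
  have "open P"
    unfolding P_def by (intro open_Int continuous_open_vimage \<Omega>(1) isCont_vec_left isCont_vec_right)
  moreover have "bounded P"
    unfolding P_def by (rule bounded_vimage_vec_left_right[OF b \<Omega>(2)])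
  moreover have "convex P"
    unfolding P_def by (intro convex_Int convex_linear_vimage linear_vec_left linear_vec_right \<Omega>(3))
  moreover have "convex_on P W"
    unfolding W_def P_def
    by (intro convex_on_add convex_on_subset[OF convex_on_linear_vimage[OF linear_vec_left cvx]]
        convex_on_subset[OF convex_on_linear_vimage[OF linear_vec_right cvx]]
        convex_Int convex_linear_vimage linear_vec_left linear_vec_right \<Omega>(3)) auto
  moreover have "(W has_derivative (\<lambda>h. G z \<bullet> h)) (at z)" if "z \<in> P" for z
    using has_derivative_add[OF has_derivative_vec_left_comp[OF du[OF in_\<Omega>(1)[OF that]]]
        has_derivative_vec_right_comp[OF du[OF in_\<Omega>(2)[OF that]]]]
    by (simp add: W_def G_def inner_vec_join[OF b])
  moreover have "(G has_derivative G' z) (at z)" if "z \<in> P" for z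
    unfolding G_def G'_def
    by (intro has_derivative_vec_join[OF b] has_derivative_vec_left_comp[OF dg[OF in_\<Omega>(1)[OF that]]]
        has_derivative_vec_right_comp[OF dg[OF in_\<Omega>(2)[OF that]]])
  moreover have "\<bar>det (matrix (G' z))\<bar> \<le> (\<bar>C\<bar> * (1 + L) ^ CARD('n))\<^sup>2 * (\<bar>W z\<bar> + 1) ^ CARD('n bit0)"
    if "z \<in> P" for z
    using det_vec_join_growth[OF b has_derivative_linear[OF dg] has_derivative_linear[OF dg]
        det_growth det_growth L L \<open>0 \<le> L\<close>] in_\<Omega>[OF that]
    by (simp add: G'_def W_def)
  moreover have "closed {z\<in>P. W z \<le> c}" for c
    using du unfolding P_def W_def
    by (intro closed_sublevel_vec_left_right_sum[where L = L] closed_sublevel L)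
      (meson continuous_at_imp_continuous_on has_derivative_continuous)
  ultimately have "bdd_above (W ` P)"
    by (rule convex_bdd_above_of_det_growth)
  then obtain M where M: "\<And>z. z \<in> P \<Longrightarrow> W z \<le> M" by (auto simp: bdd_above_def)
  have "u x \<le> M - u x0" if "x \<in> \<Omega>" for x
    using M[of "vec_join b x x0"] that x0 b by (simp add: P_def W_def)
  then show ?thesis by (rule bdd_aboveI2)
qed simp

theorem theorem1p2:
  fixes f :: "real \<Rightarrow> real"
  assumes n2: "CARD('n::finite) \<ge> 2"
    and f_cont: "continuous_on UNIV f"
    and f_nonneg: "\<And>s. f s \<ge> 0"
    and f_bdd: "\<And>t. bdd_above (f ` {..t})"
    and f_unbdd: "\<not> bdd_above (f ` {0..})"
    and f_growth: "Limsup at_top (\<lambda>s::real. ereal (f s / s ^ CARD('n))) < \<infinity>"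
    and \<Omega>_bdd: "bounded (\<Omega> :: (real^'n) set)"
    and \<Omega>_smooth: "smooth_domain \<Omega>"
    and \<Omega>_convex: "convex \<Omega>"
  shows "\<not> (\<exists>u :: real^'n \<Rightarrow> real.
              convex_on \<Omega> u \<and> Ck_on 2 \<Omega> u \<and>
              (\<forall>x\<in>\<Omega>. det (hessian u x) = f (u x)) \<and>
              (\<forall>z\<in>frontier \<Omega>. filterlim u at_top (at z within \<Omega>)))"
proof
  assume "\<exists>u :: real^'n \<Rightarrow> real.
              convex_on \<Omega> u \<and> Ck_on 2 \<Omega> u \<and>
              (\<forall>x\<in>\<Omega>. det (hessian u x) = f (u x)) \<and>
              (\<forall>z\<in>frontier \<Omega>. filterlim u at_top (at z within \<Omega>))"
  then obtain u :: "real^'n \<Rightarrow> real" where cvx: "convex_on \<Omega> u" and C2: "Ck_on 2 \<Omega> u"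
    and monge_ampere: "\<forall>x\<in>\<Omega>. det (hessian u x) = f (u x)"
    and blowup: "\<forall>z\<in>frontier \<Omega>. filterlim u at_top (at z within \<Omega>)" by blast
  have \<Omega>: "open \<Omega>" "\<Omega> \<noteq> {}" using \<Omega>_smooth by (auto simp: smooth_domain_def)
  obtain C where C: "\<And>s. f s \<le> C * (\<bar>s\<bar> + 1) ^ CARD('n)"
    using polynomial_bound_of_Limsup[OF f_bdd f_growth] by blast
  note du = Ck_on_2_has_derivative_grad[OF \<Omega>(1) C2]
  note dg = Ck_on_2_has_derivative_hessian[OF \<Omega>(1) C2]
  have "continuous_on \<Omega> u"
    using du by (meson continuous_at_imp_continuous_on has_derivative_continuous)
  then have closed_sublevel: "closed {x\<in>\<Omega>. u x \<le> c}" for c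
    by (rule closed_sublevel_of_boundary_blowup[OF \<Omega>(1) _ blowup])
  have det_growth: "\<bar>det (matrix (\<lambda>h. transpose (hessian u x) *v h))\<bar> \<le> C * (\<bar>u x\<bar> + 1) ^ CARD('n)"
    if "x \<in> \<Omega>" for x
    unfolding matrix_of_matrix_vector_mul det_transpose
    using monge_ampere that C[of "u x"] f_nonneg[of "u x"] by simp
  have "bdd_above (u ` \<Omega>)"
    using convex_bdd_above_of_hessian_growth[OF \<Omega>(1) \<Omega>_bdd \<Omega>_convex cvx du dg det_growth
        closed_sublevel] by simp
  then show False
    using not_bdd_above_of_boundary_blowup[OF \<Omega>(1) \<Omega>_bdd \<Omega>(2) blowup] by blast
qed

end
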